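(* Let $A$ be a system in a process theory with discarding that admits a broadcasting map $b : A \to A \otimes A$, i.e. $(\mathrm{id}_A \otimes \top_A)\circ b = \mathrm{id}_A = (\top_A \otimes \mathrm{id}_A)\circ b$. Suppose the theory is non-trivial in the sense that there is a causal process $f : B \to A$ which is not of the form $\tau \circ \top_B$ for any state $\tau$ of $A$. Then $\mathrm{id}_A$ is not pure in the following sense: it is not the case that for every system $E$ and every process $g : A \to A \otimes E$ with $(\mathrm{id}_A \otimes \top_E)\circ g = \mathrm{id}_A$ there exists a causal state $\rho$ of $E$ with $g = \mathrm{id}_A \otimes \rho$.
   Context: A process theory is a strict symmetric monoidal category: objects are systems, morphisms are processes, $\circ$ is sequential composition, $\otimes$ parallel composition, $I$ the unit. A state of $A$ is a process $I \to A$. A process theory with discarding has, for every system $A$, a distinguished effect $\top_A : A \to I$ with $\top_{A\otimes B} = \top_A \otimes \top_B$; a process $f:A\to B$ is causal if $\top_B \circ f = \top_A$ (for a state $\rho$ of $E$: $\top_E\circ\rho = \mathrm{id}_I$). The (dilation-based) notion of purity used here: a process $f : A \to B$ is pure if every dilation $g : A \to B \otimes E$ of $f$ (meaning $(\mathrm{id}_B \otimes \top_E)\circ g = f$) separates as $g = f \otimes \rho$ for some causal state $\rho$ of $E$. *)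

theory Defs
  imports Main
begin

text \<open>Sequential composition pcomp g f means g after f (only meaningful
 when cod f = dom g).\<close>

record ('o, 'm) ptheory =
  pdom   :: "'m \<Rightarrow> 'o"
  pcod   :: "'m \<Rightarrow> 'o"
  pcomp  :: "'m \<Rightarrow> 'm \<Rightarrow> 'm"
  pid    :: "'o \<Rightarrow> 'm"
  otens  :: "'o \<Rightarrow> 'o \<Rightarrow> 'o"
  mtens  :: "'m \<Rightarrow> 'm \<Rightarrow> 'm"
  punit  :: "'o"
  pswap  :: "'o \<Rightarrow> 'o \<Rightarrow> 'm"
  pdisc  :: "'o \<Rightarrow> 'm"

definition hom :: "('o, 'm) ptheory \<Rightarrow> 'o \<Rightarrow> 'o \<Rightarrow> 'm set" where
  "hom T A B = {f. pdom T f = A \<and> pcod T f = B}"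

definition strict_smc :: "('o, 'm) ptheory \<Rightarrow> bool" where
  "strict_smc T \<longleftrightarrow>
    \<comment> \<open>category\<close>
    (\<forall>A. pid T A \<in> hom T A A) \<and>
    (\<forall>A B C f g. f \<in> hom T A B \<longrightarrow> g \<in> hom T B C \<longrightarrow> pcomp T g f \<in> hom T A C) \<and>
    (\<forall>A B f. f \<in> hom T A B \<longrightarrow> pcomp T (pid T B) f = f \<and> pcomp T f (pid T A) = f) \<and>
    (\<forall>A B C D f g h. f \<in> hom T A B \<longrightarrow> g \<in> hom T B C \<longrightarrow> h \<in> hom T C D \<longrightarrow>
        pcomp T h (pcomp T g f) = pcomp T (pcomp T h g) f) \<and>
    \<comment> \<open>strict monoidal structure\<close>
    (\<forall>A B C D f g. f \<in> hom T A B \<longrightarrow> g \<in> hom T C D \<longrightarrow>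
        mtens T f g \<in> hom T (otens T A C) (otens T B D)) \<and>
    (\<forall>A B C. otens T (otens T A B) C = otens T A (otens T B C)) \<and>
    (\<forall>A. otens T (punit T) A = A \<and> otens T A (punit T) = A) \<and>
    (\<forall>f g h. mtens T (mtens T f g) h = mtens T f (mtens T g h)) \<and>
    (\<forall>f. mtens T (pid T (punit T)) f = f \<and> mtens T f (pid T (punit T)) = f) \<and>
    (\<forall>A B. mtens T (pid T A) (pid T B) = pid T (otens T A B)) \<and>
    (\<forall>A B C A' B' C' f g f' g'. f \<in> hom T A B \<longrightarrow> g \<in> hom T B C \<longrightarrow>
        f' \<in> hom T A' B' \<longrightarrow> g' \<in> hom T B' C' \<longrightarrow>
        mtens T (pcomp T g f) (pcomp T g' f') = pcomp T (mtens T g g') (mtens T f f')) \<and>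
    \<comment> \<open>symmetry\<close>
    (\<forall>A B. pswap T A B \<in> hom T (otens T A B) (otens T B A)) \<and>
    (\<forall>A B. pcomp T (pswap T B A) (pswap T A B) = pid T (otens T A B)) \<and>
    (\<forall>A B C D f g. f \<in> hom T A B \<longrightarrow> g \<in> hom T C D \<longrightarrow>
        pcomp T (pswap T B D) (mtens T f g) = pcomp T (mtens T g f) (pswap T A C)) \<and>
    (\<forall>A B C. pswap T A (otens T B C) =
        pcomp T (mtens T (pid T B) (pswap T A C)) (mtens T (pswap T A B) (pid T C)))"

definition process_theory_with_discarding :: "('o, 'm) ptheory \<Rightarrow> bool" where
  "process_theory_with_discarding T \<longleftrightarrow> strict_smc T \<and>
    (\<forall>A. pdisc T A \<in> hom T A (punit T)) \<and>
    (\<forall>A B. pdisc T (otens T A B) = mtens T (pdisc T A) (pdisc T B))"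

definition causal_state :: "('o, 'm) ptheory \<Rightarrow> 'o \<Rightarrow> 'm \<Rightarrow> bool" where
  "causal_state T E \<rho> \<longleftrightarrow> \<rho> \<in> hom T (punit T) E \<and> pcomp T (pdisc T E) \<rho> = pid T (punit T)"

definition causal :: "('o, 'm) ptheory \<Rightarrow> 'o \<Rightarrow> 'o \<Rightarrow> 'm \<Rightarrow> bool" where
  "causal T A B f \<longleftrightarrow> f \<in> hom T A B \<and> pcomp T (pdisc T B) f = pdisc T A"

definition pure :: "('o, 'm) ptheory \<Rightarrow> 'o \<Rightarrow> 'o \<Rightarrow> 'm \<Rightarrow> bool" where
  "pure T A B f \<longleftrightarrow> (\<forall>E g. g \<in> hom T A (otens T B E) \<longrightarrow>
      pcomp T (mtens T (pid T B) (pdisc T E)) g = f \<longrightarrow>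
      (\<exists>\<rho>. causal_state T E \<rho> \<and> g = mtens T f \<rho>))"

end

theory Submission
  imports Defs
begin

text \<open>Broadcasting is a dilation of the identity, so purity of the identity forces
  b = id \<otimes> \<rho> for a causal state \<rho>. The other marginal of b then says that
  \<top> \<otimes> \<rho> is the identity of A, i.e. discarding and re-preparing \<rho> changes nothing.
  Consequently every causal f : B \<rightarrow> A equals (\<top> \<otimes> \<rho>) \<circ> f = \<rho> \<circ> \<top>,
  contradicting non-triviality.\<close>

lemma strict_smc_id_hom:
  "strict_smc T \<Longrightarrow> pid T A \<in> hom T A A"
  unfolding strict_smc_def by (elim conjE) blast

lemma strict_smc_comp_id_left:
  "strict_smc T \<Longrightarrow> f \<in> hom T A B \<Longrightarrow> pcomp T (pid T B) f = f"
  unfolding strict_smc_def by (elim conjE) blast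

lemma strict_smc_comp_id_right:
  "strict_smc T \<Longrightarrow> f \<in> hom T A B \<Longrightarrow> pcomp T f (pid T A) = f"
  unfolding strict_smc_def by (elim conjE) blast

lemma strict_smc_tens_unit_left:
  "strict_smc T \<Longrightarrow> mtens T (pid T (punit T)) f = f"
  unfolding strict_smc_def by (elim conjE) simp

lemma strict_smc_tens_unit_right:
  "strict_smc T \<Longrightarrow> mtens T f (pid T (punit T)) = f"
  unfolding strict_smc_def by (elim conjE) simp

lemma strict_smc_interchange:
  assumes "strict_smc T"
    and "f \<in> hom T A B" "g \<in> hom T B C" "f' \<in> hom T A' B'" "g' \<in> hom T B' C'"
  shows "mtens T (pcomp T g f) (pcomp T g' f') = pcomp T (mtens T g g') (mtens T f f')"
proof -
  have "\<forall>A B C A' B' C' f g f' g'. f \<in> hom T A B \<longrightarrow> g \<in> hom T B C \<longrightarrow>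
      f' \<in> hom T A' B' \<longrightarrow> g' \<in> hom T B' C' \<longrightarrow>
      mtens T (pcomp T g f) (pcomp T g' f') = pcomp T (mtens T g g') (mtens T f f')"
    using assms(1) unfolding strict_smc_def by (elim conjE)
  with assms(2-5) show ?thesis by blast
qed

lemma tens_effect_state_eq_comp:
  assumes "strict_smc T" "e \<in> hom T A (punit T)" "\<rho> \<in> hom T (punit T) B"
  shows "mtens T e \<rho> = pcomp T \<rho> e"
proof -
  have "mtens T (pcomp T (pid T (punit T)) e) (pcomp T \<rho> (pid T (punit T)))
      = pcomp T (mtens T (pid T (punit T)) \<rho>) (mtens T e (pid T (punit T)))"
    using strict_smc_interchange[OF assms(1,2) strict_smc_id_hom[OF assms(1)]
        strict_smc_id_hom[OF assms(1)] assms(3)] .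
  with assms show ?thesis
    by (simp add: strict_smc_comp_id_left strict_smc_comp_id_right
        strict_smc_tens_unit_left strict_smc_tens_unit_right)
qed

lemma comp_tens_state_right:
  assumes "strict_smc T" "f \<in> hom T A B" "g \<in> hom T B C" "\<rho> \<in> hom T (punit T) D"
  shows "pcomp T (mtens T g \<rho>) f = mtens T (pcomp T g f) \<rho>"
proof -
  have "mtens T (pcomp T g f) (pcomp T \<rho> (pid T (punit T)))
      = pcomp T (mtens T g \<rho>) (mtens T f (pid T (punit T)))"
    using strict_smc_interchange[OF assms(1-3) strict_smc_id_hom[OF assms(1)] assms(4)] .
  with assms show ?thesis
    by (simp add: strict_smc_comp_id_right strict_smc_tens_unit_right)
qed

lemma comp_tens_id_state:
  assumes "strict_smc T" "g \<in> hom T A B" "\<rho> \<in> hom T (punit T) C"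
  shows "pcomp T (mtens T g (pid T C)) (mtens T (pid T A) \<rho>) = mtens T g \<rho>"
proof -
  have "mtens T (pcomp T g (pid T A)) (pcomp T (pid T C) \<rho>)
      = pcomp T (mtens T g (pid T C)) (mtens T (pid T A) \<rho>)"
    using strict_smc_interchange[OF assms(1) strict_smc_id_hom[OF assms(1)] assms(2,3)
        strict_smc_id_hom[OF assms(1)]] .
  with assms show ?thesis
    by (simp add: strict_smc_comp_id_left strict_smc_comp_id_right)
qed

lemma causal_eq_prepare_after_discard:
  assumes "process_theory_with_discarding T"
    and "\<rho> \<in> hom T (punit T) A" "mtens T (pdisc T A) \<rho> = pid T A"
    and "causal T B A f"
  shows "f = pcomp T \<rho> (pdisc T B)"
proof -
  have smc: "strict_smc T" and disc: "\<And>X. pdisc T X \<in> hom T X (punit T)"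
    using assms(1) unfolding process_theory_with_discarding_def by auto
  have f: "f \<in> hom T B A" and f_causal: "pcomp T (pdisc T A) f = pdisc T B"
    using assms(4) unfolding causal_def by auto
  have "f = pcomp T (mtens T (pdisc T A) \<rho>) f"
    using assms(3) smc f by (simp add: strict_smc_comp_id_left)
  also have "\<dots> = mtens T (pdisc T B) \<rho>"
    using comp_tens_state_right[OF smc f disc assms(2)] f_causal by simp
  also have "\<dots> = pcomp T \<rho> (pdisc T B)"
    using smc disc assms(2) by (rule tens_effect_state_eq_comp)
  finally show ?thesis .
qed

theorem proposition6:
  fixes T :: "('o, 'm) ptheory" and A B :: 'o and b f :: 'm
  assumes "process_theory_with_discarding T"
    and "b \<in> hom T A (otens T A A)"
    and "pcomp T (mtens T (pid T A) (pdisc T A)) b = pid T A"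
    and "pcomp T (mtens T (pdisc T A) (pid T A)) b = pid T A"
    and "causal T B A f"
    and "\<not> (\<exists>\<tau>. \<tau> \<in> hom T (punit T) A \<and> f = pcomp T \<tau> (pdisc T B))"
  shows "\<not> pure T A A (pid T A)"
proof
  assume "pure T A A (pid T A)"
  then obtain \<rho> where \<rho>: "causal_state T A \<rho>" and b: "b = mtens T (pid T A) \<rho>"
    using assms(2,3) unfolding pure_def by blast
  have smc: "strict_smc T" and disc: "pdisc T A \<in> hom T A (punit T)"
    using assms(1) unfolding process_theory_with_discarding_def by auto
  have \<rho>_state: "\<rho> \<in> hom T (punit T) A"
    using \<rho> unfolding causal_state_def by blast
  have "mtens T (pdisc T A) \<rho> = pid T A"
    using assms(4) b smc disc \<rho>_state by (simp add: comp_tens_id_state)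
  then have "f = pcomp T \<rho> (pdisc T B)"
    using assms(1,5) \<rho>_state by (intro causal_eq_prepare_after_discard)
  with assms(6) \<rho>_state show False by blast
qed

end
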